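(* Let $\tilde v$ be a square-integrable random variable (the payoff), $\tilde s$ a random variable (the signal), $B$ a standard one-dimensional Brownian motion independent of $(\tilde v,\tilde s)$, $Z_t=\sigma_ZB_t$ with $\sigma_Z>0$, and let $X_t=\int_0^t\theta_u\,du$ where $\theta$ is adapted to $\sigma(\tilde s)\vee\mathcal F^Z_t$. Let $Y_t=X_t+Z_t$ and let $\mathcal F^Y_T$ be the $\sigma$-algebra generated by $(Y_t)_{t\le T}$. Suppose that $\mathbb E[\tilde v|\tilde s]$ is measurable with respect to $\sigma(Y_T)$. Then $$\mathbb E[\tilde v|\tilde s]=\mathbb E[\tilde v|\mathcal F^Y_T].$$
   Context: $\mathcal F^Z_t$ denotes the filtration generated by $Z$. $X$ is the informed trader's cumulative order, $Z$ the cumulative noise trade and $Y$ the aggregate order flow observed by market makers. *)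

theory Defs
  imports "HOL-Probability.Probability"
begin

definition std_brownian_motion :: "'a measure \<Rightarrow> (real \<Rightarrow> 'a \<Rightarrow> real) \<Rightarrow> bool" where
  "std_brownian_motion M B \<longleftrightarrow>
     prob_space M \<and>
     (\<forall>t\<ge>0. B t \<in> borel_measurable M) \<and>
     (\<forall>\<omega>\<in>space M. B 0 \<omega> = 0) \<and>
     (\<forall>\<omega>\<in>space M. continuous_on {0..} (\<lambda>t. B t \<omega>)) \<and>
     (\<forall>s t. 0 \<le> s \<and> s < t \<longrightarrow>
        distributed M lborel (\<lambda>\<omega>. B t \<omega> - B s \<omega>) (normal_density 0 (sqrt (t - s)))) \<and>
     (\<forall>(n::nat) (\<tau>::nat \<Rightarrow> real). 0 \<le> \<tau> 0 \<and> (\<forall>i<n. \<tau> i < \<tau> (Suc i)) \<longrightarrow>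
        prob_space.indep_vars M (\<lambda>_. borel) (\<lambda>i \<omega>. B (\<tau> (Suc i)) \<omega> - B (\<tau> i) \<omega>) {..<n})"

definition path_on :: "real set \<Rightarrow> (real \<Rightarrow> 'a \<Rightarrow> real) \<Rightarrow> 'a \<Rightarrow> (real \<Rightarrow> real)" where
  "path_on I P \<omega> = restrict (\<lambda>t. P t \<omega>) I"

text \<open>sigma(s) \<or> F^Z_t: the sigma-algebra generated by s and (Z_u)_{0<=u<=t}.\<close>
definition sig_signal_noise ::
  "'a measure \<Rightarrow> 'b measure \<Rightarrow> ('a \<Rightarrow> 'b) \<Rightarrow> (real \<Rightarrow> 'a \<Rightarrow> real) \<Rightarrow> real \<Rightarrow> 'a measure" where
  "sig_signal_noise M S s Z t =
     vimage_algebra (space M) (\<lambda>\<omega>. (s \<omega>, path_on {0..t} Z \<omega>)) (S \<Otimes>\<^sub>M PiM {0..t} (\<lambda>_. borel))"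

definition sig_path :: "'a measure \<Rightarrow> (real \<Rightarrow> 'a \<Rightarrow> real) \<Rightarrow> real \<Rightarrow> 'a measure" where
  "sig_path M Y T = vimage_algebra (space M) (path_on {0..T} Y) (PiM {0..T} (\<lambda>_. borel))"

end

theory Submission
  imports Defs
begin

text \<open>Let H = \<sigma>(s, B). Because B is independent of (v, s), adjoining B to \<sigma>(s) does not change
  the conditional expectation: E[v|H] = E[v|s]. It suffices to compare integrals over the
  \<inter>-stable generators {s \<in> a} \<inter> {B \<in> b}, where independence factors out P{B \<in> b}, and to extend
  by Dynkin's \<pi>-\<lambda> theorem. The order flow Y = X + \<sigma>_Z B is H-measurable, since \<theta> is progressively
  measurable for \<sigma>(s) \<or> F^Z, so F^Y_T \<subseteq> H. By hypothesis E[v|s] has a \<sigma>(Y_T)-measurable, hence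
  F^Y_T-measurable, version, and the tower property gives E[v|F^Y_T] = E[E[v|H]|F^Y_T] = E[v|s].\<close>

lemma subalgebra_vimage_algebra:
  assumes "f \<in> measurable M N"
  shows "subalgebra M (vimage_algebra (space M) f N)"
  using sets_image_in_sets[OF refl assms] by (simp add: subalgebra_def)

lemma measurable_vimage_algebra_Pair_fst:
  assumes "(\<lambda>x. (f x, g x)) \<in> \<Omega> \<rightarrow> space (A \<Otimes>\<^sub>M B)"
  shows "f \<in> measurable (vimage_algebra \<Omega> (\<lambda>x. (f x, g x)) (A \<Otimes>\<^sub>M B)) A"
  using measurable_compose[OF measurable_vimage_algebra1[OF assms] measurable_fst] by simp

lemma measurable_vimage_algebra_Pair_snd:
  assumes "(\<lambda>x. (f x, g x)) \<in> \<Omega> \<rightarrow> space (A \<Otimes>\<^sub>M B)"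
  shows "g \<in> measurable (vimage_algebra \<Omega> (\<lambda>x. (f x, g x)) (A \<Otimes>\<^sub>M B)) B"
  using measurable_compose[OF measurable_vimage_algebra1[OF assms] measurable_snd] by simp

lemma sets_vimage_algebra_pair_measure:
  assumes "f \<in> \<Omega> \<rightarrow> space A" "g \<in> \<Omega> \<rightarrow> space B"
  shows "sets (vimage_algebra \<Omega> (\<lambda>x. (f x, g x)) (A \<Otimes>\<^sub>M B))
           = sigma_sets \<Omega> {f -` a \<inter> g -` b \<inter> \<Omega> | a b. a \<in> sets A \<and> b \<in> sets B}"
proof -
  let ?h = "\<lambda>x. (f x, g x)"
  have h: "?h \<in> \<Omega> \<rightarrow> space A \<times> space B"
    using assms by auto
  have "sets (vimage_algebra \<Omega> ?h (A \<Otimes>\<^sub>M B))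
          = {?h -` r \<inter> \<Omega> | r. r \<in> sigma_sets (space A \<times> space B) {a \<times> b | a b. a \<in> sets A \<and> b \<in> sets B}}"
    using h by (simp add: sets_vimage_algebra2 space_pair_measure sets_pair_measure)
  also have "\<dots> = sigma_sets \<Omega> {?h -` r \<inter> \<Omega> | r. r \<in> {a \<times> b | a b. a \<in> sets A \<and> b \<in> sets B}}"
    by (rule sigma_sets_vimage_commute[OF h])
  also have "{?h -` r \<inter> \<Omega> | r. r \<in> {a \<times> b | a b. a \<in> sets A \<and> b \<in> sets B}}
               = {f -` a \<inter> g -` b \<inter> \<Omega> | a b. a \<in> sets A \<and> b \<in> sets B}"
  proof (intro equalityI subsetI)
    fix X assume "X \<in> {f -` a \<inter> g -` b \<inter> \<Omega> | a b. a \<in> sets A \<and> b \<in> sets B}"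
    then obtain a b where "a \<in> sets A" "b \<in> sets B" "X = ?h -` (a \<times> b) \<inter> \<Omega>"
      by auto
    then show "X \<in> {?h -` r \<inter> \<Omega> | r. r \<in> {a \<times> b | a b. a \<in> sets A \<and> b \<in> sets B}}"
      by blast
  qed auto
  finally show ?thesis .
qed

lemma set_integral_space_Diff:
  fixes f :: "'a \<Rightarrow> 'b::{banach, second_countable_topology}"
  assumes "integrable M f" "A \<in> sets M"
  shows "(LINT x:space M - A|M. f x) = integral\<^sup>L M f - (LINT x:A|M. f x)"
proof -
  have "(LINT x:space M - A|M. f x) = (\<integral>x. f x - indicator A x *\<^sub>R f x \<partial>M)"
    unfolding set_lebesgue_integral_def
    by (rule Bochner_Integration.integral_cong) (auto split: split_indicator)
  also have "\<dots> = integral\<^sup>L M f - (LINT x:A|M. f x)"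
    unfolding set_lebesgue_integral_def
    using assms integrable_mult_indicator[OF assms(2,1)] by (intro Bochner_Integration.integral_diff)
  finally show ?thesis .
qed

lemma set_integral_eq_on_sigma_sets:
  fixes f g :: "'a \<Rightarrow> 'b::{banach, second_countable_topology}"
  assumes f: "integrable M f" and g: "integrable M g"
    and E: "Int_stable E" "E \<subseteq> sets M"
    and eq_E: "\<And>A. A \<in> E \<Longrightarrow> (LINT x:A|M. f x) = (LINT x:A|M. g x)"
    and eq_space: "integral\<^sup>L M f = integral\<^sup>L M g"
    and A: "A \<in> sigma_sets (space M) E"
  shows "(LINT x:A|M. f x) = (LINT x:A|M. g x)"
proof -
  have "E \<subseteq> Pow (space M)"
    using E(2) sets.sets_into_space by blast
  from E(1) this A show ?thesis
  proof (induction rule: sigma_sets_induct_disjoint)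
    case (compl A)
    then have "A \<in> sets M"
      using sets.sigma_sets_subset[OF E(2)] by blast
    then show ?case
      using compl.IH eq_space by (simp add: set_integral_space_Diff f g)
  next
    case (union A)
    then have A: "\<And>i. A i \<in> sets M"
      using sets.sigma_sets_subset[OF E(2)] by blast
    have disj: "\<And>i j. i \<noteq> j \<Longrightarrow> A i \<inter> A j = {}"
      using union.hyps(1) by (auto simp: disjoint_family_on_def)
    have "set_integrable M (\<Union>i. A i) h" if "integrable M h" for h :: "'a \<Rightarrow> 'b"
      using A that by (intro integrable_mult_indicator[folded set_integrable_def] sets.countable_nat_UN) auto
    then show ?case
      using union.IH f g by (simp add: lebesgue_integral_countable_add[OF A disj])
  qed (simp_all add: eq_E set_lebesgue_integral_def[of M "{}"])
qed

lemma borel_measurable_set_integral_interval: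
  fixes \<theta> :: "real \<Rightarrow> 'a \<Rightarrow> real"
  assumes "a \<le> b"
    and \<theta>: "(\<lambda>(u, \<omega>). \<theta> u \<omega>) \<in> borel_measurable (restrict_space borel {a..b} \<Otimes>\<^sub>M N)"
  shows "(\<lambda>\<omega>. LINT u:{a..b}|lborel. \<theta> u \<omega>) \<in> borel_measurable N"
proof -
  \<comment> \<open>Clamping extends \<theta> from [a, b] to the whole line without changing its integral over [a, b].\<close>
  define clamp where "clamp u = max a (min b u)" for u :: real
  have "clamp \<in> measurable lborel (restrict_space borel {a..b})"
    using \<open>a \<le> b\<close> unfolding clamp_def
    by (intro measurable_restrict_space2) (auto simp: Pi_iff)
  then have "(\<lambda>(\<omega>, u). (clamp u, \<omega>)) \<in> measurable (N \<Otimes>\<^sub>M lborel) (restrict_space borel {a..b} \<Otimes>\<^sub>M N)"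
    by measurable
  from measurable_compose[OF this \<theta>]
  have "(\<lambda>(\<omega>, u). indicator {a..b} u * \<theta> (clamp u) \<omega>) \<in> borel_measurable (N \<Otimes>\<^sub>M lborel)"
    by (simp add: case_prod_beta')
  then have "(\<lambda>\<omega>. \<integral>u. indicator {a..b} u * \<theta> (clamp u) \<omega> \<partial>lborel) \<in> borel_measurable N"
    by (rule lborel.borel_measurable_lebesgue_integral)
  moreover have "(\<integral>u. indicator {a..b} u * \<theta> (clamp u) \<omega> \<partial>lborel) = (LINT u:{a..b}|lborel. \<theta> u \<omega>)" for \<omega>
    unfolding set_lebesgue_integral_def
    by (rule Bochner_Integration.integral_cong) (auto simp: clamp_def split: split_indicator)
  ultimately show ?thesis
    by simp
qed

lemma (in prob_space) indep_set_mono: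
  assumes "indep_set A B" "A' \<subseteq> A" "B' \<subseteq> B"
  shows "indep_set A' B'"
  using assms(1) unfolding indep_set_def
  by (rule indep_sets_mono_sets) (use assms(2,3) in \<open>auto split: bool.split\<close>)

lemma (in prob_space) integral_indicator_times_indep:
  fixes h :: "'a \<Rightarrow> real"
  assumes indep: "indep_set (sets F) (sets G)"
    and F: "subalgebra M F" and G: "subalgebra M G"
    and C: "C \<in> sets F" and h: "h \<in> borel_measurable G" "integrable M h"
  shows "(\<integral>x. indicator C x * h x \<partial>M) = prob C * (\<integral>x. h x \<partial>M)"
proof -
  have C_M: "C \<in> events"
    using C F by (auto simp: subalgebra_def)
  have C_F: "(indicator C :: 'a \<Rightarrow> real) \<in> borel_measurable F"
    using C by simp
  have "indep_var borel (indicator C :: 'a \<Rightarrow> real) borel h"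
    unfolding indep_var_eq
  proof (intro conjI)
    show "random_variable borel (indicator C :: 'a \<Rightarrow> real)" "random_variable borel h"
      using measurable_from_subalg[OF F C_F] measurable_from_subalg[OF G h(1)] .
    have "sigma_sets (space M) {X -` A \<inter> space M |A. A \<in> sets borel} \<subseteq> sets H"
      if "subalgebra M H" "X \<in> borel_measurable H" for X :: "'a \<Rightarrow> real" and H
      using sets_image_in_sets[OF _ that(2), of "space M"] that(1)
      by (simp add: subalgebra_def sets_vimage_algebra)
    from indep this[OF F C_F] this[OF G h(1)]
    show "indep_set (sigma_sets (space M) {(indicator C :: 'a \<Rightarrow> real) -` A \<inter> space M |A. A \<in> sets borel})
                    (sigma_sets (space M) {h -` A \<inter> space M |A. A \<in> sets borel})"
      by (rule indep_set_mono)
  qed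
  then have "(\<integral>x. indicator C x * h x \<partial>M) = (\<integral>x. indicator C x \<partial>M) * (\<integral>x. h x \<partial>M)"
    using h(2) C_M by (intro indep_var_lebesgue_integral) (auto simp: emeasure_eq_measure)
  then show ?thesis
    using C_M by simp
qed

lemma (in prob_space) set_integral_Int_indep:
  fixes h :: "'a \<Rightarrow> real"
  assumes indep: "indep_set (sets F) (sets G)"
    and F: "subalgebra M F" and G: "subalgebra M G"
    and C: "C \<in> sets F" and A: "A \<in> sets G" and h: "h \<in> borel_measurable G" "integrable M h"
  shows "(LINT x:A \<inter> C|M. h x) = prob C * (LINT x:A|M. h x)"
proof -
  have A_M: "A \<in> events"
    using A G by (auto simp: subalgebra_def)
  have "(LINT x:A \<inter> C|M. h x) = (\<integral>x. indicator C x * (indicator A x * h x) \<partial>M)"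
    unfolding set_lebesgue_integral_def
    by (intro Bochner_Integration.integral_cong) (auto split: split_indicator)
  also have "\<dots> = prob C * (\<integral>x. indicator A x * h x \<partial>M)"
    using A h integrable_mult_indicator[OF A_M h(2)]
    by (intro integral_indicator_times_indep[OF indep F G C]) auto
  finally show ?thesis
    by (simp add: set_lebesgue_integral_def)
qed

lemma Int_stable_vimage_rectangles:
  "Int_stable {f -` a \<inter> g -` b \<inter> \<Omega> | a b. a \<in> sets A \<and> b \<in> sets B}"
proof (rule Int_stableI)
  fix X Y assume "X \<in> {f -` a \<inter> g -` b \<inter> \<Omega> | a b. a \<in> sets A \<and> b \<in> sets B}"
    and "Y \<in> {f -` a \<inter> g -` b \<inter> \<Omega> | a b. a \<in> sets A \<and> b \<in> sets B}"
  then obtain a b a' b' where "a \<in> sets A" "b \<in> sets B" "a' \<in> sets A" "b' \<in> sets B"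
    and "X = f -` a \<inter> g -` b \<inter> \<Omega>" "Y = f -` a' \<inter> g -` b' \<inter> \<Omega>"
    by blast
  then show "X \<inter> Y \<in> {f -` a \<inter> g -` b \<inter> \<Omega> | a b. a \<in> sets A \<and> b \<in> sets B}"
    by (intro CollectI exI[of _ "a \<inter> a'"] exI[of _ "b \<inter> b'"]) auto
qed

lemma set_integral_real_cond_exp_indep_rectangle:
  fixes v :: "'a \<Rightarrow> real" and s :: "'a \<Rightarrow> 'b" and P :: "'a \<Rightarrow> 'c"
  assumes "prob_space M" and v: "integrable M v"
    and s: "s \<in> measurable M S" and P: "P \<in> measurable M N"
    and indep: "prob_space.indep_set M (sets (vimage_algebra (space M) P N))
                  (sets (vimage_algebra (space M) (\<lambda>\<omega>. (v \<omega>, s \<omega>)) (borel \<Otimes>\<^sub>M S)))"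
    and a: "a \<in> sets S" and b: "b \<in> sets N"
  shows "(LINT x:s -` a \<inter> P -` b \<inter> space M|M. v x)
           = (LINT x:s -` a \<inter> P -` b \<inter> space M|M. real_cond_exp M (vimage_algebra (space M) s S) v x)"
proof -
  interpret prob_space M by fact
  define Fs where "Fs = vimage_algebra (space M) s S"
  define FP where "FP = vimage_algebra (space M) P N"
  define Fvs where "Fvs = vimage_algebra (space M) (\<lambda>\<omega>. (v \<omega>, s \<omega>)) (borel \<Otimes>\<^sub>M S)"
  define w where "w = real_cond_exp M Fs v"
  have vs: "(\<lambda>\<omega>. (v \<omega>, s \<omega>)) \<in> measurable M (borel \<Otimes>\<^sub>M S)"
    using v s by measurable
  have sub: "subalgebra M Fs" "subalgebra M FP" "subalgebra M Fvs"
    unfolding Fs_def FP_def Fvs_def using s P vs by (auto intro!: subalgebra_vimage_algebra)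
  interpret Fs: finite_measure_subalgebra M Fs
    by unfold_locales (fact sub(1))
  have v_Fvs: "v \<in> borel_measurable Fvs" and s_Fvs: "s \<in> measurable Fvs S"
    unfolding Fvs_def using measurable_space[OF vs]
    by (auto intro: measurable_vimage_algebra_Pair_fst measurable_vimage_algebra_Pair_snd)
  have "subalgebra Fvs Fs"
    using sets_image_in_sets[OF _ s_Fvs] by (simp add: subalgebra_def Fs_def Fvs_def)
  moreover have "w \<in> borel_measurable Fs"
    unfolding w_def by simp
  ultimately have w_Fvs: "w \<in> borel_measurable Fvs"
    by (rule measurable_from_subalg)
  have w_int: "integrable M w"
    unfolding w_def using v by (rule Fs.real_cond_exp_int(1))
  have A: "s -` a \<inter> space M \<in> sets Fs" and C: "P -` b \<inter> space M \<in> sets FP"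
    unfolding Fs_def FP_def by (intro in_vimage_algebra a b)+
  have A_Fvs: "s -` a \<inter> space M \<in> sets Fvs"
    using measurable_sets[OF s_Fvs a] by (simp add: Fvs_def)
  have X: "s -` a \<inter> P -` b \<inter> space M = (s -` a \<inter> space M) \<inter> (P -` b \<inter> space M)"
    by blast
  have "(LINT x:s -` a \<inter> P -` b \<inter> space M|M. v x) = prob (P -` b \<inter> space M) * (LINT x:s -` a \<inter> space M|M. v x)"
    unfolding X using indep sub(2,3) C A_Fvs v_Fvs v
    by (intro set_integral_Int_indep) (auto simp: FP_def Fvs_def)
  also have "\<dots> = prob (P -` b \<inter> space M) * (LINT x:s -` a \<inter> space M|M. w x)"
    unfolding w_def using Fs.real_cond_exp_intA[OF v A] by simp
  also have "\<dots> = (LINT x:s -` a \<inter> P -` b \<inter> space M|M. w x)"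
    unfolding X using indep sub(2,3) C A_Fvs w_Fvs w_int
    by (intro set_integral_Int_indep[symmetric]) (auto simp: FP_def Fvs_def)
  finally show ?thesis
    unfolding w_def Fs_def .
qed

lemma set_integral_real_cond_exp_indep_enlargement:
  fixes v :: "'a \<Rightarrow> real" and s :: "'a \<Rightarrow> 'b" and P :: "'a \<Rightarrow> 'c"
  assumes M: "prob_space M" and v: "integrable M v"
    and s: "s \<in> measurable M S" and P: "P \<in> measurable M N"
    and indep: "prob_space.indep_set M (sets (vimage_algebra (space M) P N))
                  (sets (vimage_algebra (space M) (\<lambda>\<omega>. (v \<omega>, s \<omega>)) (borel \<Otimes>\<^sub>M S)))"
    and D: "D \<in> sets (vimage_algebra (space M) (\<lambda>\<omega>. (s \<omega>, P \<omega>)) (S \<Otimes>\<^sub>M N))"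
  shows "(LINT x:D|M. v x) = (LINT x:D|M. real_cond_exp M (vimage_algebra (space M) s S) v x)"
proof -
  interpret prob_space M by fact
  interpret Fs: finite_measure_subalgebra M "vimage_algebra (space M) s S"
    using s by unfold_locales (rule subalgebra_vimage_algebra)
  define E where "E = {s -` a \<inter> P -` b \<inter> space M | a b. a \<in> sets S \<and> b \<in> sets N}"
  have E_stable: "Int_stable E"
    unfolding E_def by (rule Int_stable_vimage_rectangles)
  have E_M: "E \<subseteq> sets M"
    unfolding E_def using s P by auto
  have E_eq: "(LINT x:X|M. v x) = (LINT x:X|M. real_cond_exp M (vimage_algebra (space M) s S) v x)"
    if "X \<in> E" for X
    using that set_integral_real_cond_exp_indep_rectangle[OF M v s P indep] by (auto simp: E_def)
  have D_E: "D \<in> sigma_sets (space M) E"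
    using D measurable_space[OF s] measurable_space[OF P]
    by (subst (asm) sets_vimage_algebra_pair_measure) (auto simp: E_def)
  show ?thesis
    using v Fs.real_cond_exp_int[OF v]
    by (intro set_integral_eq_on_sigma_sets[OF _ _ E_stable E_M E_eq _ D_E]) auto
qed

lemma real_cond_exp_indep_enlargement:
  fixes v :: "'a \<Rightarrow> real" and s :: "'a \<Rightarrow> 'b" and P :: "'a \<Rightarrow> 'c"
  assumes M: "prob_space M" and v: "integrable M v"
    and s: "s \<in> measurable M S" and P: "P \<in> measurable M N"
    and indep: "prob_space.indep_set M (sets (vimage_algebra (space M) P N))
                  (sets (vimage_algebra (space M) (\<lambda>\<omega>. (v \<omega>, s \<omega>)) (borel \<Otimes>\<^sub>M S)))"
  shows "AE x in M. real_cond_exp M (vimage_algebra (space M) (\<lambda>\<omega>. (s \<omega>, P \<omega>)) (S \<Otimes>\<^sub>M N)) v x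
                      = real_cond_exp M (vimage_algebra (space M) s S) v x"
proof -
  interpret prob_space M by fact
  let ?H = "vimage_algebra (space M) (\<lambda>\<omega>. (s \<omega>, P \<omega>)) (S \<Otimes>\<^sub>M N)"
  let ?Fs = "vimage_algebra (space M) s S"
  have sP: "(\<lambda>\<omega>. (s \<omega>, P \<omega>)) \<in> measurable M (S \<Otimes>\<^sub>M N)"
    using s P by measurable
  interpret H: finite_measure_subalgebra M ?H
    using sP by unfold_locales (rule subalgebra_vimage_algebra)
  interpret Fs: finite_measure_subalgebra M ?Fs
    using s by unfold_locales (rule subalgebra_vimage_algebra)
  have "(\<lambda>x. x) \<in> measurable ?H ?Fs"
    using measurable_space[OF sP]
    by (intro measurable_vimage_algebra2 measurable_vimage_algebra_Pair_fst) auto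
  from measurable_compose[OF this borel_measurable_cond_exp]
  have "real_cond_exp M ?Fs v \<in> borel_measurable ?H"
    by simp
  then show ?thesis
    using v set_integral_real_cond_exp_indep_enlargement[OF M v s P indep]
    by (intro H.real_cond_exp_charact) auto
qed

lemma (in sigma_finite_subalgebra) real_cond_exp_coarser_eq:
  fixes f g :: "'a \<Rightarrow> real"
  assumes H: "subalgebra M H" "subalgebra H F" and f: "integrable M f"
    and g: "g \<in> borel_measurable F" and fg: "AE x in M. real_cond_exp M H f x = g x"
  shows "AE x in M. real_cond_exp M F f x = g x"
proof -
  interpret H: sigma_finite_subalgebra M H
    by (rule nested_subalg_is_sigma_finite[OF H])
  have g_M: "g \<in> borel_measurable M"
    using g by (rule measurable_from_subalg[OF subalg])
  have "integrable M g"
    using H.real_cond_exp_int(1)[OF f] fg g_M by (subst integrable_cong_AE[symmetric]) auto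
  have "AE x in M. real_cond_exp M F f x = real_cond_exp M F (real_cond_exp M H f) x"
    using H f by (auto intro: AE_symmetric real_cond_exp_nested_subalg)
  moreover have "AE x in M. real_cond_exp M F (real_cond_exp M H f) x = real_cond_exp M F g x"
    using fg g_M by (intro real_cond_exp_cong) auto
  moreover have "AE x in M. real_cond_exp M F g x = g x"
    using \<open>integrable M g\<close> g by (rule real_cond_exp_F_meas)
  ultimately show ?thesis
    by auto
qed

lemma measurable_path_on:
  assumes "\<And>t. t \<in> I \<Longrightarrow> P t \<in> borel_measurable M"
  shows "path_on I P \<in> measurable M (PiM I (\<lambda>_. borel))"
  unfolding path_on_def using assms by (intro measurable_restrict) auto

lemma sets_sig_path_subset:
  assumes "space N = space M" and "\<And>t. t \<in> {0..T} \<Longrightarrow> Y t \<in> borel_measurable N"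
  shows "sets (sig_path M Y T) \<subseteq> sets N"
  unfolding sig_path_def using assms by (intro sets_image_in_sets measurable_path_on) auto

lemma borel_measurable_sig_path:
  assumes "t \<in> {0..T}"
  shows "Y t \<in> borel_measurable (sig_path M Y T)"
proof -
  have "path_on {0..T} Y \<in> measurable (sig_path M Y T) (PiM {0..T} (\<lambda>_. borel))"
    unfolding sig_path_def by (rule measurable_vimage_algebra1) (simp add: path_on_def space_PiM)
  from measurable_compose[OF this measurable_component_singleton[OF assms]]
  show ?thesis
    using assms by (simp add: path_on_def)
qed

lemma measurable_sig_path_vimage_algebra:
  assumes "t \<in> {0..T}" and "g \<in> measurable (vimage_algebra (space M) (Y t) borel) N"
  shows "g \<in> measurable (sig_path M Y T) N"
proof -
  have "sets (vimage_algebra (space M) (Y t) borel) \<subseteq> sets (sig_path M Y T)"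
    using assms(1) by (intro sets_image_in_sets borel_measurable_sig_path) (auto simp: sig_path_def)
  then have "subalgebra (sig_path M Y T) (vimage_algebra (space M) (Y t) borel)"
    by (simp add: subalgebra_def sig_path_def)
  then show ?thesis
    using assms(2) by (rule measurable_from_subalg)
qed

lemma measurable_sig_signal_noise:
  assumes "space N = space M" and "s \<in> measurable N S"
    and "\<And>u. u \<in> {0..t} \<Longrightarrow> Z u \<in> borel_measurable N"
  shows "(\<lambda>x. x) \<in> measurable N (sig_signal_noise M S s Z t)"
  unfolding sig_signal_noise_def using assms
  by (intro measurable_vimage_algebra2 measurable_Pair measurable_path_on) auto

lemma sets_sig_path_order_flow_subset:
  fixes B Z Y \<theta> :: "real \<Rightarrow> 'a \<Rightarrow> real"
  assumes s: "s \<in> measurable M S" and B: "\<And>t. t \<ge> 0 \<Longrightarrow> B t \<in> borel_measurable M"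
    and Z: "Z = (\<lambda>t \<omega>. c * B t \<omega>)"
    and \<theta>: "\<And>t. t \<ge> 0 \<Longrightarrow> (\<lambda>(u, \<omega>). \<theta> u \<omega>)
                  \<in> borel_measurable (restrict_space borel {0..t} \<Otimes>\<^sub>M sig_signal_noise M S s Z t)"
    and Y: "Y = (\<lambda>t \<omega>. (LINT u:{0..t}|lborel. \<theta> u \<omega>) + Z t \<omega>)"
  shows "sets (sig_path M Y T)
           \<subseteq> sets (vimage_algebra (space M) (\<lambda>\<omega>. (s \<omega>, path_on {0..} B \<omega>)) (S \<Otimes>\<^sub>M PiM {0..} (\<lambda>_. borel)))"
    (is "_ \<subseteq> sets ?H")
proof (rule sets_sig_path_subset)
  have path_B: "path_on {0..} B \<in> measurable M (PiM {0..} (\<lambda>_. borel))"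
    using B by (intro measurable_path_on) auto
  have pair_space: "(\<lambda>\<omega>. (s \<omega>, path_on {0..} B \<omega>)) \<in> space M \<rightarrow> space (S \<Otimes>\<^sub>M PiM {0..} (\<lambda>_. borel))"
    using measurable_space[OF s] measurable_space[OF path_B] by (auto simp: space_pair_measure)
  have s_H: "s \<in> measurable ?H S"
    using pair_space by (rule measurable_vimage_algebra_Pair_fst)
  have Z_H: "Z t \<in> borel_measurable ?H" if "t \<ge> 0" for t
  proof -
    from measurable_compose[OF measurable_vimage_algebra_Pair_snd[OF pair_space]
        measurable_component_singleton[of t "{0..}"]]
    have "B t \<in> borel_measurable ?H"
      using that by (simp add: path_on_def)
    then show ?thesis
      unfolding Z by simp
  qed
  have "(\<lambda>\<omega>. LINT u:{0..t}|lborel. \<theta> u \<omega>) \<in> borel_measurable ?H" if "t \<ge> 0" for t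
    using measurable_compose[OF measurable_sig_signal_noise[OF _ s_H Z_H]
        borel_measurable_set_integral_interval[OF that \<theta>[OF that]]]
    by simp
  then show "Y t \<in> borel_measurable ?H" if "t \<in> {0..T}" for t
    using that Z_H unfolding Y by auto
qed simp

theorem lemma1:
  fixes M :: "'a measure" and S :: "'b measure"
    and v :: "'a \<Rightarrow> real" and s :: "'a \<Rightarrow> 'b"
    and B Z X Y \<theta> :: "real \<Rightarrow> 'a \<Rightarrow> real"
    and \<sigma>Z T :: real
  assumes P: "prob_space M"
    and v_meas: "v \<in> borel_measurable M"
    and v_sq: "integrable M (\<lambda>\<omega>. (v \<omega>)\<^sup>2)"
    and s_meas: "s \<in> measurable M S"
    and BM: "std_brownian_motion M B"
    and indep: "prob_space.indep_set M
                  (sets (vimage_algebra (space M) (path_on {0..} B) (PiM {0..} (\<lambda>_. borel))))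
                  (sets (vimage_algebra (space M) (\<lambda>\<omega>. (v \<omega>, s \<omega>)) (borel \<Otimes>\<^sub>M S)))"
    and sigZ: "\<sigma>Z > 0"
    and Z_def: "Z = (\<lambda>t \<omega>. \<sigma>Z * B t \<omega>)"
    and T: "0 \<le> T"
    and \<theta>_adapted: "\<forall>t\<ge>0. \<theta> t \<in> borel_measurable (sig_signal_noise M S s Z t)"
    and \<theta>_prog: "\<forall>t\<ge>0. (\<lambda>(u, \<omega>). \<theta> u \<omega>)
                  \<in> borel_measurable (restrict_space borel {0..t} \<Otimes>\<^sub>M sig_signal_noise M S s Z t)"
    and \<theta>_int: "\<forall>\<omega>\<in>space M. set_integrable lborel {0..T} (\<lambda>u. \<theta> u \<omega>)"
    and X_def: "X = (\<lambda>t \<omega>. LINT u:{0..t}|lborel. \<theta> u \<omega>)"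
    and Y_def: "Y = (\<lambda>t \<omega>. X t \<omega> + Z t \<omega>)"
    and meas_YT: "\<exists>g. g \<in> borel_measurable (vimage_algebra (space M) (Y T) borel) \<and>
                  (AE \<omega> in M. g \<omega> = real_cond_exp M (vimage_algebra (space M) s S) v \<omega>)"
  shows "AE \<omega> in M. real_cond_exp M (vimage_algebra (space M) s S) v \<omega>
                   = real_cond_exp M (sig_path M Y T) v \<omega>"
proof -
  interpret prob_space M by (rule P)
  let ?H = "vimage_algebra (space M) (\<lambda>\<omega>. (s \<omega>, path_on {0..} B \<omega>)) (S \<Otimes>\<^sub>M PiM {0..} (\<lambda>_. borel))"
  let ?G = "sig_path M Y T"
  have v: "integrable M v"
    by (rule square_integrable_imp_integrable[OF v_meas v_sq])
  have B: "\<And>t. t \<ge> 0 \<Longrightarrow> B t \<in> borel_measurable M"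
    using BM by (simp add: std_brownian_motion_def)
  then have path_B: "path_on {0..} B \<in> measurable M (PiM {0..} (\<lambda>_. borel))"
    by (intro measurable_path_on) auto
  have H_M: "subalgebra M ?H"
    using s_meas path_B by (intro subalgebra_vimage_algebra) measurable
  have "sets ?G \<subseteq> sets ?H"
    using s_meas B Z_def \<theta>_prog by (intro sets_sig_path_order_flow_subset) (auto simp: Y_def X_def)
  then have G_H: "subalgebra ?H ?G"
    by (simp add: subalgebra_def sig_path_def)
  interpret G: finite_measure_subalgebra M ?G
    using H_M G_H by unfold_locales (auto simp: subalgebra_def)
  obtain g where g_YT: "g \<in> borel_measurable (vimage_algebra (space M) (Y T) borel)"
    and g: "AE \<omega> in M. g \<omega> = real_cond_exp M (vimage_algebra (space M) s S) v \<omega>"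
    using meas_YT by blast
  have "g \<in> borel_measurable ?G"
    using T g_YT by (intro measurable_sig_path_vimage_algebra) auto
  moreover have "AE \<omega> in M. real_cond_exp M ?H v \<omega> = g \<omega>"
    using real_cond_exp_indep_enlargement[OF P v s_meas path_B indep] g by auto
  ultimately have "AE \<omega> in M. real_cond_exp M ?G v \<omega> = g \<omega>"
    using H_M G_H v by (intro G.real_cond_exp_coarser_eq)
  then show ?thesis
    using g by auto
qed

end
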